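(* Let $p$ be a prime, $e\ge1$, $G$ a finite abelian group of order $p^e$, and $q\neq p$ a prime. Let $S=\bigoplus_\rho S_\rho\subset\mathbf{Q}[G]$, $S_\rho\cong\mathbf{Z}[\omega_{k(\rho)}]$, be the integral closure of $\mathbf{Z}[G]$ in $\mathbf{Q}[G]$, the sum running over the chosen representatives $\rho$ of the equivalence classes of representations, and let $e_\rho\in S$ be the idempotent of the factor $S_\rho$. Let $\psi^\ell$ ($\ell$ a prime) denote the ring endomorphism of $\mathbf{Q}[G]$ with $\psi^\ell(g)=g^\ell$. Then $$\psi^p(e_\rho)=\sum_{\tau:\ \psi\tau=\rho}e_\tau\ \text{ if }\rho\neq1,\qquad \psi^p(e_1)=e_1+\sum_{\tau\neq1,\ \psi\tau=1}e_\tau,\qquad \psi^q(e_\rho)=e_\rho,$$ where the sums run over chosen representatives $\tau$.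
   Context: A representation is a group homomorphism $\rho\colon G\to\mathbf{C}^*$; its level $k(\rho)$ is defined by $|\rho(G)|=p^{k(\rho)}$. Two representations are equivalent if they have the same kernel; $1$ is the trivial representation. For a representation $\tau$ of positive level, $\psi\tau$ is $x\mapsto\tau(x^p)$. A representative is chosen in each equivalence class so that, for chosen representatives $\tau,\rho$, if $\psi\tau$ is equivalent to $\rho$ then $\psi\tau=\rho$. $\omega_k=\exp(2\pi i/p^k)$. $\mathbf{Q}[G]\cong\bigoplus_\rho\mathbf{Q}(\omega_{k(\rho)})$ via the maps induced by the $\rho$, and $S_\rho$ is the preimage of $\mathbf{Z}[\omega_{k(\rho)}]$ in the corresponding factor. *)

theory Defs
  imports Complex_Main "HOL-Library.Function_Algebras" "HOL-Computational_Algebra.Primes"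
begin

text \<open>The finite abelian group G is a finite type of class ab_group_add (written
additively). The group algebra Q[G] is represented by functions G -> rat
(coefficient of each group element).\<close>

definition gmul :: "nat \<Rightarrow> 'g::ab_group_add \<Rightarrow> 'g" where
  "gmul n x = (\<Sum>i<n. x)"   \<comment> \<open>the power x^n in multiplicative notation\<close>

definition is_rep :: "('g::ab_group_add \<Rightarrow> complex) \<Rightarrow> bool" where
  "is_rep \<rho> \<longleftrightarrow> (\<forall>x y. \<rho> (x + y) = \<rho> x * \<rho> y) \<and> (\<forall>x. \<rho> x \<noteq> 0)"

definition rep_ker :: "('g::ab_group_add \<Rightarrow> complex) \<Rightarrow> 'g set" where
  "rep_ker \<rho> = {x. \<rho> x = 1}"

definition rep_equiv :: "('g::ab_group_add \<Rightarrow> complex) \<Rightarrow> ('g \<Rightarrow> complex) \<Rightarrow> bool" where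
  "rep_equiv \<rho> \<sigma> \<longleftrightarrow> rep_ker \<rho> = rep_ker \<sigma>"

definition triv_rep :: "'g \<Rightarrow> complex" where
  "triv_rep = (\<lambda>_. 1)"

definition psi_rep :: "nat \<Rightarrow> ('g::ab_group_add \<Rightarrow> complex) \<Rightarrow> ('g \<Rightarrow> complex)" where
  "psi_rep p \<tau> = (\<lambda>x. \<tau> (gmul p x))"

definition rep_ext :: "('g::{finite,ab_group_add} \<Rightarrow> complex) \<Rightarrow> ('g \<Rightarrow> rat) \<Rightarrow> complex" where
  "rep_ext \<rho> a = (\<Sum>g\<in>UNIV. of_rat (a g) * \<rho> g)"

definition psi_alg :: "nat \<Rightarrow> ('g::{finite,ab_group_add} \<Rightarrow> rat) \<Rightarrow> ('g \<Rightarrow> rat)" where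
  "psi_alg l a = (\<lambda>h. \<Sum>g\<in>{g. gmul l g = h}. a g)"

text \<open>The idempotent e_rho of Q[G] belonging to the factor indexed by rho in
Q[G] = (+)_rho Q(omega_k(rho)) (the map being induced by the representatives
rho): it is mapped to 1 by every representation equivalent to rho and to 0 by
every other representation.\<close>
definition idem :: "('g::{finite,ab_group_add} \<Rightarrow> complex) \<Rightarrow> ('g \<Rightarrow> rat)" where
  "idem \<rho> = (THE a. \<forall>\<sigma>. is_rep \<sigma> \<longrightarrow>
              rep_ext \<sigma> a = (if rep_equiv \<sigma> \<rho> then 1 else 0))"

text \<open>A system R of chosen representatives, one in each equivalence class,
compatible with psi: for chosen tau (of positive level, i.e. nontrivial) and rho,
if psi tau is equivalent to rho then psi tau = rho.\<close>
definition rep_system :: "nat \<Rightarrow> ('g::ab_group_add \<Rightarrow> complex) set \<Rightarrow> bool" where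
  "rep_system p R \<longleftrightarrow>
     (\<forall>\<rho>\<in>R. is_rep \<rho>) \<and>
     (\<forall>\<sigma>. is_rep \<sigma> \<longrightarrow> (\<exists>!\<rho>. \<rho> \<in> R \<and> rep_equiv \<sigma> \<rho>)) \<and>
     (\<forall>\<tau>\<in>R. \<forall>\<rho>\<in>R. \<tau> \<noteq> triv_rep \<longrightarrow> rep_equiv (psi_rep p \<tau>) \<rho> \<longrightarrow> psi_rep p \<tau> = \<rho>)"

end

theory Submission
  imports Defs "HOL-Library.FuncSet"
begin

text \<open>Evaluation at all characters \<sigma> of G is injective on \<open>\<rat>[G]\<close>: characters separate the
points of G (extend a character from a subgroup one cyclic step at a time), so Fourier
inversion recovers a from the values \<open>\<sigma>(a)\<close>. Hence an identity in \<open>\<rat>[G]\<close> may be checked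
character by character. Now \<open>\<sigma>(e\<^sub>\<rho>)\<close> is 1 or 0 according as \<sigma> is equivalent to \<rho>, and
\<open>\<sigma>(\<psi>\<^sup>l a) = (\<sigma> \<circ> (x \<mapsto> x\<^sup>l))(a)\<close>. For \<open>l = p\<close> the compatibility of the chosen representatives
with \<open>\<psi>\<close> turns "\<open>\<psi>\<tau>\<close> equivalent to \<rho>" into "\<open>\<psi>\<tau> = \<rho>\<close>"; for \<open>l = q\<close>, prime to \<open>|G|\<close>,
\<open>\<sigma>(x)\<^sup>q = 1\<close> iff \<open>\<sigma>(x) = 1\<close>, so \<open>\<sigma> \<circ> (x \<mapsto> x\<^sup>q)\<close> has the same kernel as \<sigma> (this is all that
is used of the hypothesis \<open>|G| = p\<^sup>e\<close>). Finally the idempotents exist: by induction on the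
index of a subgroup K, the average over K minus the elements already built for all strictly
larger subgroups evaluates to 1 exactly at the characters with kernel K.\<close>

lemma gmul_0 [simp]: "gmul 0 x = 0"
  by (simp add: gmul_def)

lemma gmul_Suc: "gmul (Suc n) x = x + gmul n x"
  by (simp add: gmul_def add.commute)

lemma gmul_1 [simp]: "gmul (Suc 0) x = x"
  by (simp add: gmul_def)

lemma gmul_add_left: "gmul (m + n) x = gmul m x + gmul n x"
  by (induction m) (simp_all add: gmul_Suc add.assoc)

lemma gmul_add_right: "gmul n (x + y) = gmul n x + gmul n y"
  by (simp add: gmul_def sum.distrib)

lemma sum_const_eq_gmul: "finite A \<Longrightarrow> (\<Sum>a\<in>A. x) = gmul (card A) x"
  by (induction rule: finite_induct) (simp_all add: gmul_Suc)

lemma gmul_card_UNIV: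
  fixes x :: "'g::{finite,ab_group_add}"
  shows "gmul (card (UNIV :: 'g set)) x = 0"
proof -
  have "(\<Sum>y\<in>UNIV. y) = (\<Sum>y\<in>UNIV. x + y)"
    by (rule sum.reindex_bij_witness[of _ "\<lambda>y. x + y" "\<lambda>y. - x + y"]) (auto simp: algebra_simps)
  also have "\<dots> = gmul (card (UNIV :: 'g set)) x + (\<Sum>y\<in>UNIV. y)"
    by (simp add: sum.distrib sum_const_eq_gmul)
  finally show ?thesis by simp
qed

lemma is_rep_zero: "is_rep \<sigma> \<Longrightarrow> \<sigma> 0 = 1"
  unfolding is_rep_def by (metis add_0 mult_cancel_left2)

lemma is_rep_gmul: "is_rep \<sigma> \<Longrightarrow> \<sigma> (gmul n x) = \<sigma> x ^ n"
  by (induction n) (simp_all add: is_rep_zero gmul_Suc is_rep_def)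

lemma is_rep_pow_card:
  fixes x :: "'g::{finite,ab_group_add}"
  shows "is_rep \<sigma> \<Longrightarrow> \<sigma> x ^ card (UNIV :: 'g set) = 1"
  by (metis is_rep_gmul gmul_card_UNIV is_rep_zero)

lemma is_rep_triv: "is_rep triv_rep"
  by (simp add: is_rep_def triv_rep_def)

lemma is_rep_mult: "is_rep \<sigma> \<Longrightarrow> is_rep \<tau> \<Longrightarrow> is_rep (\<lambda>x. \<sigma> x * \<tau> x)"
  unfolding is_rep_def by (simp add: algebra_simps)

lemma is_rep_divide: "is_rep \<sigma> \<Longrightarrow> is_rep \<tau> \<Longrightarrow> is_rep (\<lambda>x. \<sigma> x / \<tau> x)"
  unfolding is_rep_def by simp

lemma is_rep_psi_rep: "is_rep \<sigma> \<Longrightarrow> is_rep (psi_rep l \<sigma>)"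
  unfolding is_rep_def psi_rep_def by (simp add: gmul_add_right)

lemma finite_reps: "finite {\<sigma> :: 'g::{finite,ab_group_add} \<Rightarrow> complex. is_rep \<sigma>}"
proof -
  let ?U = "{z :: complex. z ^ card (UNIV :: 'g set) = 1}"
  have "1 \<le> card (UNIV :: 'g set)" by (simp add: Suc_le_eq card_gt_0_iff)
  then have "finite ?U" by (rule finite_roots_unity)
  then have "finite (Pi\<^sub>E (UNIV :: 'g set) (\<lambda>_. ?U))" by (intro finite_PiE) simp_all
  moreover have "{\<sigma> :: 'g \<Rightarrow> complex. is_rep \<sigma>} \<subseteq> Pi\<^sub>E UNIV (\<lambda>_. ?U)"
    unfolding PiE_UNIV_domain using is_rep_pow_card by auto
  ultimately show ?thesis by (rule finite_subset[rotated])
qed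

lemma rep_equiv_triv_iff: "rep_equiv \<sigma> triv_rep \<longleftrightarrow> \<sigma> = triv_rep"
  unfolding rep_equiv_def rep_ker_def triv_rep_def by (auto simp: set_eq_iff fun_eq_iff)

lemma rep_equiv_commute: "rep_equiv \<sigma> \<tau> \<longleftrightarrow> rep_equiv \<tau> \<sigma>"
  unfolding rep_equiv_def by auto

lemma psi_rep_triv [simp]: "psi_rep l triv_rep = triv_rep"
  by (simp add: psi_rep_def triv_rep_def)

lemma rep_equiv_psi_rep: "rep_equiv \<sigma> \<tau> \<Longrightarrow> rep_equiv (psi_rep l \<sigma>) (psi_rep l \<tau>)"
  unfolding rep_equiv_def rep_ker_def psi_rep_def by (simp add: set_eq_iff)

lemma rep_equiv_psi_rep_coprime:
  fixes \<sigma> :: "'g::{finite,ab_group_add} \<Rightarrow> complex"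
  assumes \<sigma>: "is_rep \<sigma>" and coprime: "coprime q (card (UNIV :: 'g set))" and "q \<noteq> 0"
  shows "rep_equiv (psi_rep q \<sigma>) \<sigma>"
proof -
  obtain u v where "q * u = card (UNIV :: 'g set) * v + gcd q (card (UNIV :: 'g set))"
    using bezout_nat[OF \<open>q \<noteq> 0\<close>] by blast
  then have uv: "q * u = card (UNIV :: 'g set) * v + 1" using coprime by simp
  have "\<sigma> x ^ q = 1 \<longleftrightarrow> \<sigma> x = 1" for x
  proof
    have "\<sigma> x = \<sigma> x ^ (card (UNIV :: 'g set) * v + 1)"
      using is_rep_pow_card[OF \<sigma>, of x] by (simp add: power_mult)
    also have "\<dots> = (\<sigma> x ^ q) ^ u" by (simp only: uv flip: power_mult)
    finally show "\<sigma> x ^ q = 1 \<Longrightarrow> \<sigma> x = 1" by simp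
  qed simp
  then show ?thesis
    unfolding rep_equiv_def rep_ker_def psi_rep_def is_rep_gmul[OF \<sigma>] by simp
qed

section \<open>Extending characters from subgroups\<close>

definition subgrp :: "'g::ab_group_add set \<Rightarrow> bool" where
  "subgrp H \<longleftrightarrow> 0 \<in> H \<and> (\<forall>x\<in>H. \<forall>y\<in>H. x + y \<in> H) \<and> (\<forall>x\<in>H. - x \<in> H)"

definition subgrp_char :: "'g::ab_group_add set \<Rightarrow> ('g \<Rightarrow> complex) \<Rightarrow> bool" where
  "subgrp_char H \<chi> \<longleftrightarrow> (\<forall>x\<in>H. \<forall>y\<in>H. \<chi> (x + y) = \<chi> x * \<chi> y) \<and> (\<forall>x\<in>H. \<chi> x \<noteq> 0)"

lemma subgrp_char_zero: "subgrp H \<Longrightarrow> subgrp_char H \<chi> \<Longrightarrow> \<chi> 0 = 1"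
  unfolding subgrp_def subgrp_char_def by (metis add_0 mult_cancel_left2)

lemma subgrp_rep_ker: "is_rep \<sigma> \<Longrightarrow> subgrp (rep_ker \<sigma>)"
  unfolding subgrp_def rep_ker_def
  by (auto simp: is_rep_zero is_rep_def) (metis is_rep_def is_rep_zero left_minus mult_1_right)

lemma relative_order_exists:
  fixes H :: "'g::{finite,ab_group_add} set"
  assumes "subgrp H"
  obtains n where "0 < n" "gmul n x \<in> H" "\<And>m. 0 < m \<Longrightarrow> m < n \<Longrightarrow> gmul m x \<notin> H"
proof -
  let ?P = "\<lambda>n. 0 < n \<and> gmul n x \<in> H"
  have "?P (card (UNIV :: 'g set))" using assms by (simp add: gmul_card_UNIV subgrp_def card_gt_0_iff)
  then have "?P (LEAST n. ?P n)" by (rule LeastI)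
  then show ?thesis using that not_less_Least[of _ ?P] by blast
qed

lemma exists_complex_nth_root: "\<exists>z :: complex. z ^ n = w" if "n > 0"
proof -
  have "rcis (root n (cmod w)) (Arg w / n) ^ n = rcis (root n (cmod w) ^ n) (n * (Arg w / n))"
    by (rule DeMoivre2)
  also have "\<dots> = w" using that by (simp add: rcis_cmod_Arg)
  finally show ?thesis by blast
qed

text \<open>One cyclic step: H is enlarged by x, whose order modulo H is n, and \<chi> is extended by
sending x to an n-th root z of \<open>\<chi>(n x)\<close>.\<close>

locale char_extension =
  fixes H :: "'g::ab_group_add set" and \<chi> :: "'g \<Rightarrow> complex" and x :: 'g and n :: nat and z :: complex
  assumes subgrp: "subgrp H" and char: "subgrp_char H \<chi>" and x_notin: "x \<notin> H"
    and order_pos: "0 < n" and gmul_order_in: "gmul n x \<in> H"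
    and gmul_less_notin: "\<And>m. 0 < m \<Longrightarrow> m < n \<Longrightarrow> gmul m x \<notin> H"
    and z_root: "z ^ n = \<chi> (gmul n x)"
begin

lemma order_gt_1: "1 < n"
proof -
  have "n \<noteq> 1"
  proof
    assume "n = 1"
    then show False using x_notin gmul_order_in by simp
  qed
  then show ?thesis using order_pos by linarith
qed

lemma z_nonzero: "z \<noteq> 0"
proof
  assume "z = 0"
  then have "\<chi> (gmul n x) = 0" using z_root order_pos by (metis power_0_left neq0_conv)
  then show False using char gmul_order_in unfolding subgrp_char_def by blast
qed

lemma char_mult: "h \<in> H \<Longrightarrow> h' \<in> H \<Longrightarrow> \<chi> (h + h') = \<chi> h * \<chi> h'"
  using char unfolding subgrp_char_def by blast

lemma decomp_unique_ordered:
  assumes "h1 \<in> H" "h2 \<in> H" "k2 \<le> k1" "k1 < n" and eq: "h1 + gmul k1 x = h2 + gmul k2 x"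
  shows "k1 = k2"
proof -
  have "gmul (k1 - k2) x = h2 - h1"
    using eq gmul_add_left[of "k1 - k2" k2 x] \<open>k2 \<le> k1\<close> by (simp add: algebra_simps)
  also have "\<dots> \<in> H" using assms(1,2) subgrp unfolding subgrp_def by (metis diff_conv_add_uminus)
  finally show ?thesis using gmul_less_notin[of "k1 - k2"] assms(3,4) by linarith
qed

lemma decomp_unique:
  assumes "h1 \<in> H" "h2 \<in> H" "k1 < n" "k2 < n" and eq: "h1 + gmul k1 x = h2 + gmul k2 x"
  shows "h1 = h2 \<and> k1 = k2"
proof -
  have "k1 = k2"
    using decomp_unique_ordered[OF assms(1,2) _ assms(3) eq]
      decomp_unique_ordered[OF assms(2,1) _ assms(4) eq[symmetric]] by linarith
  then show ?thesis using eq by simp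
qed

definition ext_grp :: "'g set" where
  "ext_grp = {h + gmul k x | h k. h \<in> H \<and> k < n}"

definition ext_char :: "'g \<Rightarrow> complex" where
  "ext_char y = (THE c. \<exists>h k. h \<in> H \<and> k < n \<and> y = h + gmul k x \<and> c = \<chi> h * z ^ k)"

lemma ext_char_reduced: "h \<in> H \<Longrightarrow> k < n \<Longrightarrow> ext_char (h + gmul k x) = \<chi> h * z ^ k"
  unfolding ext_char_def by (rule the_equality) (use decomp_unique in blast)+

text \<open>Beyond \<open>k < n\<close> one reduces modulo \<open>n x \<in> H\<close>, which is where \<open>z\<^sup>n = \<chi>(n x)\<close> is used.\<close>

lemma ext_char_gmul:
  "h \<in> H \<Longrightarrow> h + gmul k x \<in> ext_grp \<and> ext_char (h + gmul k x) = \<chi> h * z ^ k"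
proof (induction k arbitrary: h rule: less_induct)
  case (less k)
  show ?case
  proof (cases "k < n")
    case True
    then show ?thesis using less.prems ext_char_reduced unfolding ext_grp_def by blast
  next
    case False
    define h' where "h' = h + gmul n x"
    have h': "h' \<in> H" using less.prems gmul_order_in subgrp unfolding h'_def subgrp_def by blast
    have eq: "h + gmul k x = h' + gmul (k - n) x"
      using False gmul_add_left[of n "k - n" x] by (simp add: h'_def add.assoc)
    have "\<chi> h' * z ^ (k - n) = \<chi> h * (z ^ n * z ^ (k - n))"
      using char_mult[OF less.prems gmul_order_in] by (simp add: h'_def z_root)
    also have "\<dots> = \<chi> h * z ^ k" using False by (simp flip: power_add)
    finally have reduced: "\<chi> h' * z ^ (k - n) = \<chi> h * z ^ k" .
    have "k - n < k" using False order_pos by simp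
    then show ?thesis using less.IH[of "k - n" h'] h' eq reduced by simp
  qed
qed

lemma ext_grp_add:
  assumes "y1 \<in> ext_grp" "y2 \<in> ext_grp"
  shows "y1 + y2 \<in> ext_grp \<and> ext_char (y1 + y2) = ext_char y1 * ext_char y2"
proof -
  obtain h1 k1 h2 k2 where y: "y1 = h1 + gmul k1 x" "y2 = h2 + gmul k2 x" "h1 \<in> H" "h2 \<in> H"
    using assms unfolding ext_grp_def by blast
  have sum: "y1 + y2 = (h1 + h2) + gmul (k1 + k2) x" using y by (simp add: gmul_add_left algebra_simps)
  have h12: "h1 + h2 \<in> H" using y subgrp unfolding subgrp_def by blast
  have "ext_char (y1 + y2) = \<chi> (h1 + h2) * z ^ (k1 + k2)" using ext_char_gmul[OF h12] sum by simp
  also have "\<dots> = (\<chi> h1 * z ^ k1) * (\<chi> h2 * z ^ k2)" using char_mult y by (simp add: power_add mult_ac)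
  also have "\<dots> = ext_char y1 * ext_char y2" using ext_char_gmul y by simp
  finally show ?thesis using ext_char_gmul[OF h12] sum by simp
qed

lemma ext_grp_uminus: "y \<in> ext_grp \<Longrightarrow> - y \<in> ext_grp"
proof -
  assume "y \<in> ext_grp"
  then obtain h k where y: "y = h + gmul k x" "h \<in> H" "k < n" unfolding ext_grp_def by blast
  have "- y = (- h - gmul n x) + gmul (n - k) x"
    using y gmul_add_left[of "n - k" k x] by (simp add: algebra_simps)
  moreover have "- h - gmul n x \<in> H"
    using y gmul_order_in subgrp unfolding subgrp_def by (metis diff_conv_add_uminus)
  ultimately show ?thesis using ext_char_gmul by metis
qed

lemma subset_ext_grp: "h \<in> H \<Longrightarrow> h \<in> ext_grp \<and> ext_char h = \<chi> h"
  using ext_char_gmul[of h 0] by simp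

lemma ext_char_x: "x \<in> ext_grp \<and> ext_char x = z"
  using ext_char_gmul[of 0 1] subgrp subgrp_char_zero[OF subgrp char] unfolding subgrp_def by simp

lemma subgrp_ext_grp: "subgrp ext_grp"
  using subset_ext_grp subgrp ext_grp_add ext_grp_uminus unfolding subgrp_def by blast

lemma subgrp_char_ext_grp: "subgrp_char ext_grp ext_char"
proof -
  have "ext_char y \<noteq> 0" if "y \<in> ext_grp" for y
    using that ext_char_reduced char z_nonzero unfolding ext_grp_def subgrp_char_def by auto
  then show ?thesis using ext_grp_add unfolding subgrp_char_def by blast
qed

end

lemma subgrp_char_extends:
  fixes H :: "'g::{finite,ab_group_add} set"
  assumes "subgrp H" "subgrp_char H \<chi>"
  shows "\<exists>\<sigma>. is_rep \<sigma> \<and> (\<forall>h\<in>H. \<sigma> h = \<chi> h)"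
  using assms
proof (induction "card (UNIV - H)" arbitrary: H \<chi> rule: less_induct)
  case less
  show ?case
  proof (cases "H = UNIV")
    case True
    then show ?thesis using less.prems unfolding subgrp_char_def is_rep_def by blast
  next
    case False
    then obtain x where x: "x \<notin> H" by blast
    obtain n where n: "0 < n" "gmul n x \<in> H" "\<And>m. 0 < m \<Longrightarrow> m < n \<Longrightarrow> gmul m x \<notin> H"
      using relative_order_exists[OF less.prems(1)] by blast
    obtain z where "z ^ n = \<chi> (gmul n x)" using exists_complex_nth_root[OF n(1)] by blast
    then interpret char_extension H \<chi> x n z
      using less.prems x n by unfold_locales
    have "card (UNIV - ext_grp) < card (UNIV - H)"
      using subset_ext_grp ext_char_x x by (intro psubset_card_mono) auto
    then obtain \<sigma> where "is_rep \<sigma>" "\<forall>h\<in>ext_grp. \<sigma> h = ext_char h"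
      using less.hyps subgrp_ext_grp subgrp_char_ext_grp by blast
    then show ?thesis using subset_ext_grp by auto
  qed
qed

lemma exists_rep_ne_1:
  fixes g :: "'g::{finite,ab_group_add}"
  assumes "g \<noteq> 0"
  shows "\<exists>\<sigma>. is_rep \<sigma> \<and> \<sigma> g \<noteq> 1"
proof -
  have triv: "subgrp {0 :: 'g}" "subgrp_char {0 :: 'g} (\<lambda>_. 1)"
    unfolding subgrp_def subgrp_char_def by simp_all
  obtain n where n: "0 < n" "gmul n g \<in> {0}" "\<And>m. 0 < m \<Longrightarrow> m < n \<Longrightarrow> gmul m g \<notin> {0}"
    using relative_order_exists[OF triv(1)] by blast
  define z where "z = cis (2 * pi * real 1 / real n)"
  interpret char_extension "{0}" "\<lambda>_. 1" g n z
  proof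
    have "z ^ n = cis (real n * (2 * pi * real 1 / real n))" unfolding z_def by (rule DeMoivre)
    also have "\<dots> = 1" using n(1) by simp
    finally show "z ^ n = 1" .
  qed (use triv assms n in auto)
  have "inj_on (\<lambda>k. cis (2 * pi * real k / real n)) {..<n}"
    using bij_betw_roots_unity[OF order_pos] by (simp add: bij_betw_def)
  from inj_on_contraD[OF this, of 1 0] have "z \<noteq> cis (2 * pi * real 0 / real n)"
    unfolding z_def using order_gt_1 by simp
  then have "ext_char g \<noteq> 1" using ext_char_x by simp
  moreover obtain \<sigma> where "is_rep \<sigma>" "\<forall>h\<in>ext_grp. \<sigma> h = ext_char h"
    using subgrp_char_extends[OF subgrp_ext_grp subgrp_char_ext_grp] by blast
  ultimately show ?thesis using ext_char_x by auto
qed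

section \<open>Fourier inversion\<close>

lemma sum_reps_eq_0:
  fixes g :: "'g::{finite,ab_group_add}"
  assumes "g \<noteq> 0"
  shows "(\<Sum>\<sigma>\<in>{\<sigma>. is_rep \<sigma>}. \<sigma> g) = 0"
proof -
  obtain \<sigma>0 where \<sigma>0: "is_rep \<sigma>0" "\<sigma>0 g \<noteq> 1" using exists_rep_ne_1[OF assms] by blast
  then have nz: "\<sigma>0 x \<noteq> 0" for x unfolding is_rep_def by blast
  let ?S = "\<Sum>\<sigma>\<in>{\<sigma> :: 'g \<Rightarrow> complex. is_rep \<sigma>}. \<sigma> g"
  have "(\<Sum>\<sigma>\<in>{\<sigma> :: 'g \<Rightarrow> complex. is_rep \<sigma>}. \<sigma>0 g * \<sigma> g) = ?S"
    by (rule sum.reindex_bij_witness[of _ "\<lambda>\<tau> x. \<tau> x / \<sigma>0 x" "\<lambda>\<sigma> x. \<sigma>0 x * \<sigma> x"])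
       (auto simp: nz is_rep_mult is_rep_divide \<sigma>0)
  then have "\<sigma>0 g * ?S = ?S" by (simp add: sum_distrib_left)
  then have "(\<sigma>0 g - 1) * ?S = 0" by (simp add: algebra_simps)
  then show ?thesis using \<sigma>0 by simp
qed

lemma sum_rep_ext_mult:
  fixes a :: "'g::{finite,ab_group_add} \<Rightarrow> rat"
  shows "(\<Sum>\<sigma>\<in>{\<sigma>. is_rep \<sigma>}. rep_ext \<sigma> a * \<sigma> (- h))
           = of_rat (a h) * of_nat (card {\<sigma> :: 'g \<Rightarrow> complex. is_rep \<sigma>})"
proof -
  let ?R = "{\<sigma> :: 'g \<Rightarrow> complex. is_rep \<sigma>}"
  have orth: "(\<Sum>\<sigma>\<in>?R. \<sigma> (g - h)) = (if g = h then of_nat (card ?R) else 0)" for g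
    using sum_reps_eq_0[of "g - h"] by (simp add: is_rep_zero)
  have "(\<Sum>\<sigma>\<in>?R. rep_ext \<sigma> a * \<sigma> (- h)) = (\<Sum>\<sigma>\<in>?R. \<Sum>g\<in>UNIV. of_rat (a g) * \<sigma> (g + - h))"
  proof (rule sum.cong[OF refl])
    fix \<sigma> assume "\<sigma> \<in> ?R"
    then have "\<sigma> (g + - h) = \<sigma> g * \<sigma> (- h)" for g unfolding is_rep_def by blast
    then show "rep_ext \<sigma> a * \<sigma> (- h) = (\<Sum>g\<in>UNIV. of_rat (a g) * \<sigma> (g + - h))"
      unfolding rep_ext_def by (simp add: sum_distrib_right mult.assoc)
  qed
  also have "\<dots> = (\<Sum>g\<in>UNIV. of_rat (a g) * (\<Sum>\<sigma>\<in>?R. \<sigma> (g + - h)))"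
    by (subst sum.swap) (simp add: sum_distrib_left)
  also have "\<dots> = of_rat (a h) * of_nat (card ?R)"
    by (simp add: orth if_distrib cong: if_cong)
  finally show ?thesis .
qed

lemma rep_ext_inject:
  fixes a b :: "'g::{finite,ab_group_add} \<Rightarrow> rat"
  assumes "\<And>\<sigma>. is_rep \<sigma> \<Longrightarrow> rep_ext \<sigma> a = rep_ext \<sigma> b"
  shows "a = b"
proof
  fix h
  have "card {\<sigma> :: 'g \<Rightarrow> complex. is_rep \<sigma>} \<noteq> 0"
    using finite_reps is_rep_triv by (metis card_0_eq empty_iff mem_Collect_eq)
  moreover have "of_rat (a h) * of_nat (card {\<sigma> :: 'g \<Rightarrow> complex. is_rep \<sigma>})
      = (of_rat (b h) :: complex) * of_nat (card {\<sigma> :: 'g \<Rightarrow> complex. is_rep \<sigma>})"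
    using assms by (simp flip: sum_rep_ext_mult)
  ultimately show "a h = b h" by simp
qed

section \<open>The idempotents\<close>

lemma sum_fun_apply: "(\<Sum>i\<in>S. f i) x = (\<Sum>i\<in>S. f i x)"
  by (induction S rule: infinite_finite_induct) simp_all

lemma rep_ext_add: "rep_ext \<sigma> (a + b) = rep_ext \<sigma> a + rep_ext \<sigma> b"
  unfolding rep_ext_def by (simp add: of_rat_add distrib_right sum.distrib)

lemma rep_ext_diff: "rep_ext \<sigma> (a - b) = rep_ext \<sigma> a - rep_ext \<sigma> b"
  unfolding rep_ext_def by (simp add: of_rat_diff left_diff_distrib sum_subtractf)

lemma rep_ext_sum: "rep_ext \<sigma> (\<Sum>i\<in>S. f i) = (\<Sum>i\<in>S. rep_ext \<sigma> (f i))"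
  unfolding rep_ext_def sum_fun_apply of_rat_sum sum_distrib_right by (rule sum.swap)

lemma rep_ext_psi_alg: "rep_ext \<sigma> (psi_alg l a) = rep_ext (psi_rep l \<sigma>) a"
proof -
  have "rep_ext \<sigma> (psi_alg l a)
      = (\<Sum>h\<in>UNIV. \<Sum>g\<in>{g \<in> UNIV. gmul l g = h}. of_rat (a g) * \<sigma> (gmul l g))"
    unfolding rep_ext_def psi_alg_def by (simp add: of_rat_sum sum_distrib_right)
  also have "\<dots> = (\<Sum>g\<in>UNIV. of_rat (a g) * \<sigma> (gmul l g))"
    by (rule sum.group) simp_all
  finally show ?thesis unfolding rep_ext_def psi_rep_def .
qed

definition subgrp_average :: "'g::finite set \<Rightarrow> 'g \<Rightarrow> rat" where
  "subgrp_average K = (\<lambda>g. if g \<in> K then 1 / of_nat (card K) else 0)"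

lemma rep_ext_subgrp_average:
  fixes K :: "'g::{finite,ab_group_add} set"
  assumes K: "subgrp K" and \<sigma>: "is_rep \<sigma>"
  shows "rep_ext \<sigma> (subgrp_average K) = (if K \<subseteq> rep_ker \<sigma> then 1 else 0)"
proof -
  have "rep_ext \<sigma> (subgrp_average K) = (\<Sum>g\<in>UNIV. if g \<in> K then \<sigma> g / of_nat (card K) else 0)"
    unfolding rep_ext_def subgrp_average_def by (rule sum.cong) (simp_all add: of_rat_divide)
  also have "\<dots> = (\<Sum>g\<in>K. \<sigma> g) / of_nat (card K)"
    by (simp add: sum.inter_restrict[symmetric] sum_divide_distrib)
  also have "(\<Sum>g\<in>K. \<sigma> g) = (if K \<subseteq> rep_ker \<sigma> then of_nat (card K) else 0)"
  proof (cases "K \<subseteq> rep_ker \<sigma>")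
    case True
    then show ?thesis by (simp add: rep_ker_def subset_iff)
  next
    case False
    then obtain h0 where h0: "h0 \<in> K" "\<sigma> h0 \<noteq> 1" unfolding rep_ker_def by blast
    have "(\<Sum>g\<in>K. \<sigma> h0 * \<sigma> g) = (\<Sum>g\<in>K. \<sigma> g)"
    proof (rule sum.reindex_bij_witness[of _ "\<lambda>g. - h0 + g" "\<lambda>g. h0 + g"])
      show "\<And>g. g \<in> K \<Longrightarrow> h0 + g \<in> K" "\<And>g. g \<in> K \<Longrightarrow> - h0 + g \<in> K"
        using K h0 unfolding subgrp_def by blast+
      show "\<And>g. \<sigma> (h0 + g) = \<sigma> h0 * \<sigma> g" using \<sigma> unfolding is_rep_def by blast
    qed (simp_all add: add.assoc[symmetric])
    then have "(\<sigma> h0 - 1) * (\<Sum>g\<in>K. \<sigma> g) = 0" by (simp add: sum_distrib_left algebra_simps)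
    then show ?thesis using h0 False by simp
  qed
  finally show ?thesis using K unfolding subgrp_def by (auto simp: card_gt_0_iff)
qed

lemma exists_kernel_indicator:
  fixes K :: "'g::{finite,ab_group_add} set"
  shows "\<exists>a. \<forall>\<sigma>. is_rep \<sigma> \<longrightarrow> rep_ext \<sigma> a = (if rep_ker \<sigma> = K then 1 else 0)"
proof (induction "card (UNIV - K)" arbitrary: K rule: less_induct)
  case less
  show ?case
  proof (cases "subgrp K")
    case False
    then show ?thesis using subgrp_rep_ker by (intro exI[of _ 0]) (auto simp: rep_ext_def)
  next
    case True
    have "\<forall>H\<in>{H. K \<subset> H}. \<exists>a. \<forall>\<sigma>. is_rep \<sigma> \<longrightarrow> rep_ext \<sigma> a = (if rep_ker \<sigma> = H then 1 else 0)"
    proof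
      fix H assume "H \<in> {H. K \<subset> H}"
      then have "card (UNIV - H) < card (UNIV - K)" by (intro psubset_card_mono) auto
      then show "\<exists>a. \<forall>\<sigma>. is_rep \<sigma> \<longrightarrow> rep_ext \<sigma> a = (if rep_ker \<sigma> = H then 1 else 0)"
        by (rule less.hyps)
    qed
    then obtain f where "\<forall>H\<in>{H. K \<subset> H}. \<forall>\<sigma>. is_rep \<sigma> \<longrightarrow>
        rep_ext \<sigma> (f H) = (if rep_ker \<sigma> = H then 1 else 0)"
      by (rule bchoice[elim_format]) blast
    then have f: "\<And>H \<sigma>. K \<subset> H \<Longrightarrow> is_rep \<sigma> \<Longrightarrow>
        rep_ext \<sigma> (f H) = (if rep_ker \<sigma> = H then 1 else 0)"
      by blast
    have "rep_ext \<sigma> (subgrp_average K - (\<Sum>H\<in>{H. K \<subset> H}. f H)) = (if rep_ker \<sigma> = K then 1 else 0)"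
      if \<sigma>: "is_rep \<sigma>" for \<sigma>
    proof -
      have "(\<Sum>H\<in>{H. K \<subset> H}. rep_ext \<sigma> (f H)) = (if K \<subset> rep_ker \<sigma> then 1 else 0)"
        using f[OF _ \<sigma>] by simp
      then show ?thesis
        unfolding rep_ext_diff rep_ext_sum rep_ext_subgrp_average[OF True \<sigma>] by auto
    qed
    then show ?thesis by blast
  qed
qed

lemma rep_ext_idem:
  fixes \<rho> :: "'g::{finite,ab_group_add} \<Rightarrow> complex"
  assumes "is_rep \<sigma>"
  shows "rep_ext \<sigma> (idem \<rho>) = (if rep_equiv \<sigma> \<rho> then 1 else 0)"
proof -
  let ?P = "\<lambda>a. \<forall>\<sigma>. is_rep \<sigma> \<longrightarrow> rep_ext \<sigma> a = (if rep_equiv \<sigma> \<rho> then 1 else 0)"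
  obtain a where "?P a"
    using exists_kernel_indicator[of "rep_ker \<rho>"] unfolding rep_equiv_def by blast
  moreover have "b = a" if "?P b" for b
    using that \<open>?P a\<close> by (intro rep_ext_inject) simp
  ultimately have "?P (THE a. ?P a)" by (rule theI)
  then show ?thesis using assms unfolding idem_def by blast
qed

lemma rep_system_unique_rep:
  assumes "rep_system p R" "is_rep \<sigma>"
  obtains t where "t \<in> R" "rep_equiv \<sigma> t" "\<And>\<tau>. \<tau> \<in> R \<Longrightarrow> rep_equiv \<sigma> \<tau> \<Longrightarrow> \<tau> = t"
  using assms unfolding rep_system_def by metis

lemma rep_system_psi_rep_eq:
  "rep_system p R \<Longrightarrow> \<tau> \<in> R \<Longrightarrow> \<rho> \<in> R \<Longrightarrow> \<tau> \<noteq> triv_rep \<Longrightarrow>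
    rep_equiv (psi_rep p \<tau>) \<rho> \<Longrightarrow> psi_rep p \<tau> = \<rho>"
  unfolding rep_system_def by blast

lemma rep_ext_sum_idem:
  fixes R :: "('g::{finite,ab_group_add} \<Rightarrow> complex) set"
  assumes R: "rep_system p R" and \<sigma>: "is_rep \<sigma>"
    and t: "t \<in> R" "rep_equiv \<sigma> t" and T: "T \<subseteq> R"
  shows "rep_ext \<sigma> (\<Sum>\<tau>\<in>T. idem \<tau>) = (if t \<in> T then 1 else 0)"
proof -
  obtain t' where t': "\<And>\<tau>. \<tau> \<in> R \<Longrightarrow> rep_equiv \<sigma> \<tau> \<Longrightarrow> \<tau> = t'"
    using rep_system_unique_rep[OF R \<sigma>] by blast
  have "R \<subseteq> {\<sigma>. is_rep \<sigma>}" using R unfolding rep_system_def by blast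
  then have "finite T" using T finite_reps by (blast intro: finite_subset)
  have "rep_ext \<sigma> (\<Sum>\<tau>\<in>T. idem \<tau>) = (\<Sum>\<tau>\<in>T. if t = \<tau> then 1 else 0)"
    unfolding rep_ext_sum rep_ext_idem[OF \<sigma>] using t t' T by (intro sum.cong) auto
  then show ?thesis using \<open>finite T\<close> by simp
qed

lemma psi_alg_idem_nontriv:
  fixes R :: "('g::{finite,ab_group_add} \<Rightarrow> complex) set"
  assumes R: "rep_system p R" and \<rho>: "\<rho> \<in> R" "\<rho> \<noteq> triv_rep"
  shows "psi_alg p (idem \<rho>) = (\<Sum>\<tau>\<in>{\<tau>\<in>R. psi_rep p \<tau> = \<rho>}. idem \<tau>)"
proof (rule rep_ext_inject)
  fix \<sigma> :: "'g \<Rightarrow> complex" assume \<sigma>: "is_rep \<sigma>"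
  obtain t where t: "t \<in> R" "rep_equiv \<sigma> t" using rep_system_unique_rep[OF R \<sigma>] by blast
  have "rep_equiv (psi_rep p \<sigma>) \<rho> \<longleftrightarrow> rep_equiv (psi_rep p t) \<rho>"
    using rep_equiv_psi_rep[OF t(2), of p] unfolding rep_equiv_def by simp
  also have "\<dots> \<longleftrightarrow> psi_rep p t = \<rho>"
  proof (cases "t = triv_rep")
    case True
    then show ?thesis using \<rho>(2) rep_equiv_triv_iff[of \<rho>] rep_equiv_commute by auto
  next
    case False
    then show ?thesis using rep_system_psi_rep_eq[OF R t(1) \<rho>(1)] by (auto simp: rep_equiv_def)
  qed
  finally show "rep_ext \<sigma> (psi_alg p (idem \<rho>)) = rep_ext \<sigma> (\<Sum>\<tau>\<in>{\<tau>\<in>R. psi_rep p \<tau> = \<rho>}. idem \<tau>)"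
    using rep_ext_sum_idem[OF R \<sigma> t] t(1)
    by (simp add: rep_ext_psi_alg rep_ext_idem[OF is_rep_psi_rep[OF \<sigma>]])
qed

lemma psi_alg_idem_triv:
  fixes R :: "('g::{finite,ab_group_add} \<Rightarrow> complex) set"
  assumes R: "rep_system p R"
  shows "psi_alg p (idem triv_rep) =
           idem triv_rep + (\<Sum>\<tau>\<in>{\<tau>\<in>R. \<tau> \<noteq> triv_rep \<and> psi_rep p \<tau> = triv_rep}. idem \<tau>)"
proof (rule rep_ext_inject)
  fix \<sigma> :: "'g \<Rightarrow> complex" assume \<sigma>: "is_rep \<sigma>"
  obtain t where t: "t \<in> R" "rep_equiv \<sigma> t" using rep_system_unique_rep[OF R \<sigma>] by blast
  have "rep_equiv (psi_rep p \<sigma>) triv_rep \<longleftrightarrow> psi_rep p t = triv_rep"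
    using rep_equiv_psi_rep[OF t(2), of p] rep_equiv_triv_iff[of "psi_rep p t"]
    unfolding rep_equiv_def by simp
  moreover have "rep_equiv \<sigma> triv_rep \<longleftrightarrow> t = triv_rep"
    using t(2) rep_equiv_triv_iff[of t] unfolding rep_equiv_def by auto
  ultimately show "rep_ext \<sigma> (psi_alg p (idem triv_rep)) = rep_ext \<sigma> (idem triv_rep +
      (\<Sum>\<tau>\<in>{\<tau>\<in>R. \<tau> \<noteq> triv_rep \<and> psi_rep p \<tau> = triv_rep}. idem \<tau>))"
    using rep_ext_sum_idem[OF R \<sigma> t] t(1)
    by (simp add: rep_ext_add rep_ext_psi_alg rep_ext_idem[OF \<sigma>] rep_ext_idem[OF is_rep_psi_rep[OF \<sigma>]])
qed

lemma psi_alg_idem_coprime: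
  fixes \<rho> :: "'g::{finite,ab_group_add} \<Rightarrow> complex"
  assumes "coprime q (card (UNIV :: 'g set))" "q \<noteq> 0"
  shows "psi_alg q (idem \<rho>) = idem \<rho>"
proof (rule rep_ext_inject)
  fix \<sigma> :: "'g \<Rightarrow> complex" assume \<sigma>: "is_rep \<sigma>"
  have "rep_equiv (psi_rep q \<sigma>) \<rho> \<longleftrightarrow> rep_equiv \<sigma> \<rho>"
    using rep_equiv_psi_rep_coprime[OF \<sigma> assms] unfolding rep_equiv_def by simp
  then show "rep_ext \<sigma> (psi_alg q (idem \<rho>)) = rep_ext \<sigma> (idem \<rho>)"
    by (simp add: rep_ext_psi_alg rep_ext_idem[OF is_rep_psi_rep[OF \<sigma>]] rep_ext_idem[OF \<sigma>])
qed

theorem mainTheorem8: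
  fixes p q e :: nat and R :: "('g::{finite,ab_group_add} \<Rightarrow> complex) set"
  assumes "prime p" and "e \<ge> 1" and "card (UNIV :: 'g set) = p ^ e"
    and "prime q" and "q \<noteq> p"
    and "rep_system p R"
  shows "(\<forall>\<rho>\<in>R. \<rho> \<noteq> triv_rep \<longrightarrow>
           psi_alg p (idem \<rho>) = (\<Sum>\<tau>\<in>{\<tau>\<in>R. psi_rep p \<tau> = \<rho>}. idem \<tau>)) \<and>
         psi_alg p (idem triv_rep) =
           idem triv_rep + (\<Sum>\<tau>\<in>{\<tau>\<in>R. \<tau> \<noteq> triv_rep \<and> psi_rep p \<tau> = triv_rep}. idem \<tau>) \<and>
         (\<forall>\<rho>\<in>R. psi_alg q (idem \<rho>) = idem \<rho>)"
proof -
  have "coprime q (card (UNIV :: 'g set))"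
    using primes_coprime[OF assms(4,1,5)] assms(3) by simp
  moreover have "q \<noteq> 0" using assms(4) by auto
  ultimately show ?thesis
    using psi_alg_idem_nontriv[OF assms(6)] psi_alg_idem_triv[OF assms(6)] psi_alg_idem_coprime
    by blast
qed

end
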